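(* For every $\varepsilon>0$ there exists a nonsplit characteristically nilpotent Lie algebra $\mathfrak{h}$ such that \[\frac{\dim C^1\mathfrak{h}-\dim Z(\mathfrak{h})}{\dim Z(\mathfrak{h})}<\varepsilon.\]
   Context: All Lie algebras are finite-dimensional and complex. $C^1\mathfrak{h}=[\mathfrak{h},\mathfrak{h}]$ and $Z(\mathfrak{h})$ denotes the center. A Lie algebra is nonsplit if it is not the direct sum of two nonzero ideals. A nilpotent Lie algebra $\mathfrak{g}$ is characteristically nilpotent if there is $m$ with $\mathfrak{g}^{[m]}=0$, where $\mathfrak{g}^{[1]}=\{f(Y): f\in \mathrm{Der}(\mathfrak{g}), Y\in\mathfrak{g}\}$ and $\mathfrak{g}^{[k]}=\mathrm{Der}(\mathfrak{g})(\mathfrak{g}^{[k-1]})$ (equivalently, $\mathrm{Der}(\mathfrak{g})$ is nilpotent). *)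

theory Defs
  imports "HOL-Analysis.Analysis" "HOL-Library.Function_Algebras"
begin

text \<open>Ambient complex vector space: functions nat => complex with pointwise
operations. Every finite-dimensional complex Lie algebra is isomorphic to one
whose underlying space is a finite-dimensional subspace L of this space.\<close>

type_synonym vec = "nat \<Rightarrow> complex"

definition scl :: "complex \<Rightarrow> vec \<Rightarrow> vec" where
  "scl c v = (\<lambda>i. c * v i)"

abbreviation "vspan \<equiv> module.span scl"
abbreviation "vsubspace \<equiv> module.subspace scl"
abbreviation "vdim \<equiv> vector_space.dim scl"

text \<open>A finite-dimensional complex Lie algebra with underlying space L and bracket br
(only the restriction of br to L matters).\<close>
definition lie_algebra :: "vec set \<Rightarrow> (vec \<Rightarrow> vec \<Rightarrow> vec) \<Rightarrow> bool" where
  "lie_algebra L br \<longleftrightarrow>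
     vsubspace L \<and> (\<exists>B. finite B \<and> B \<subseteq> L \<and> vspan B = L) \<and>
     (\<forall>x\<in>L. \<forall>y\<in>L. br x y \<in> L) \<and>
     (\<forall>x\<in>L. \<forall>y\<in>L. \<forall>z\<in>L. \<forall>c. br (x + y) z = br x z + br y z \<and>
                              br (scl c x) z = scl c (br x z) \<and>
                              br z (x + y) = br z x + br z y \<and>
                              br z (scl c x) = scl c (br z x)) \<and>
     (\<forall>x\<in>L. br x x = 0) \<and>
     (\<forall>x\<in>L. \<forall>y\<in>L. \<forall>z\<in>L. br x (br y z) + br y (br z x) + br z (br x y) = 0)"

definition derived :: "vec set \<Rightarrow> (vec \<Rightarrow> vec \<Rightarrow> vec) \<Rightarrow> vec set" where
  "derived L br = vspan {br x y | x y. x \<in> L \<and> y \<in> L}"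

definition center :: "vec set \<Rightarrow> (vec \<Rightarrow> vec \<Rightarrow> vec) \<Rightarrow> vec set" where
  "center L br = {z \<in> L. \<forall>x\<in>L. br z x = 0}"

definition lie_ideal :: "vec set \<Rightarrow> (vec \<Rightarrow> vec \<Rightarrow> vec) \<Rightarrow> vec set \<Rightarrow> bool" where
  "lie_ideal L br I \<longleftrightarrow> vsubspace I \<and> I \<subseteq> L \<and> (\<forall>x\<in>L. \<forall>y\<in>I. br x y \<in> I)"

definition nonsplit :: "vec set \<Rightarrow> (vec \<Rightarrow> vec \<Rightarrow> vec) \<Rightarrow> bool" where
  "nonsplit L br \<longleftrightarrow>
     \<not> (\<exists>I J. lie_ideal L br I \<and> lie_ideal L br J \<and> I \<noteq> {0} \<and> J \<noteq> {0} \<and>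
              I \<inter> J = {0} \<and> {a + b | a b. a \<in> I \<and> b \<in> J} = L)"

fun lcs :: "vec set \<Rightarrow> (vec \<Rightarrow> vec \<Rightarrow> vec) \<Rightarrow> nat \<Rightarrow> vec set" where
  "lcs L br 0 = L"
| "lcs L br (Suc k) = vspan {br x y | x y. x \<in> L \<and> y \<in> lcs L br k}"

definition nilpotent_lie :: "vec set \<Rightarrow> (vec \<Rightarrow> vec \<Rightarrow> vec) \<Rightarrow> bool" where
  "nilpotent_lie L br \<longleftrightarrow> (\<exists>k. lcs L br k = {0})"

definition derivations :: "vec set \<Rightarrow> (vec \<Rightarrow> vec \<Rightarrow> vec) \<Rightarrow> (vec \<Rightarrow> vec) set" where
  "derivations L br = {f. (\<forall>x\<in>L. f x \<in> L) \<and>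
      (\<forall>x\<in>L. \<forall>y\<in>L. \<forall>c. f (x + y) = f x + f y \<and> f (scl c x) = scl c (f x)) \<and>
      (\<forall>x\<in>L. \<forall>y\<in>L. f (br x y) = br (f x) y + br x (f y))}"

fun char_seq :: "vec set \<Rightarrow> (vec \<Rightarrow> vec \<Rightarrow> vec) \<Rightarrow> nat \<Rightarrow> vec set" where
  "char_seq L br 0 = L"
| "char_seq L br (Suc k) = {f y | f y. f \<in> derivations L br \<and> y \<in> char_seq L br k}"

definition char_nilpotent :: "vec set \<Rightarrow> (vec \<Rightarrow> vec \<Rightarrow> vec) \<Rightarrow> bool" where
  "char_nilpotent L br \<longleftrightarrow> nilpotent_lie L br \<and> (\<exists>m\<ge>1. char_seq L br m = {0})"

end

theory Submission
  imports Defs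
begin

text \<open>
Let \<open>k\<close> be the 8-dimensional nilpotent Lie algebra with generators \<open>e\<^sub>0, ..., e\<^sub>3\<close>
given by \<open>kbracket\<close>, and let \<open>h\<^sub>N\<close> be the sum of \<open>N\<close> copies of \<open>k\<close>, centrally extended
by new elements \<open>a\<^sub>i\<^sub>j\<close> (\<open>i < j\<close>) that are declared to be the brackets of the copies of \<open>e\<^sub>0\<close>
in the \<open>i\<close>-th and \<open>j\<close>-th summand. These \<open>N(N-1)/2\<close> central elements make \<open>dim Z(h\<^sub>N)\<close>
grow quadratically, while \<open>dim h\<^sub>N - dim Z(h\<^sub>N) \<le> 8N\<close>; so the ratio tends to 0.

Give \<open>e\<^sub>0, ..., e\<^sub>3\<close> weight 1, \<open>e\<^sub>4, e\<^sub>5\<close> and the \<open>a\<^sub>i\<^sub>j\<close> weight 2 and \<open>e\<^sub>6, e\<^sub>7\<close> weight 3.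
A derivation maps each generator into weight \<open>\<ge> 2\<close>: inside its own summand this is a finite
computation in \<open>k\<close>, and the components in other summands vanish because derivations preserve
the centre. Hence every derivation raises the weight filtration, and \<open>h\<^sub>N\<close> is characteristically
nilpotent. Likewise, the projection \<open>\<pi>\<close> onto a direct ideal summand commutes with brackets and is
therefore a scalar \<open>\<lambda>\<close> modulo weight \<open>\<ge> 2\<close>, with the same \<open>\<lambda>\<close> on all summands because of
the \<open>a\<^sub>i\<^sub>j\<close>. So one of the two ideals lies in weight \<open>\<ge> 2\<close>; since it is spanned by brackets
of its own elements it then lies in arbitrarily high weight, i.e. it is zero.
\<close>

lemma scl_apply [simp]: "scl c v i = c * v i"
  by (simp add: scl_def)

interpretation V: vector_space scl
  by unfold_locales (auto simp: scl_def fun_eq_iff algebra_simps)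

lemma scl_zero_left [simp]: "scl 0 v = 0"
  by (simp add: fun_eq_iff)

lemma sum_vec_apply: "(sum f X :: vec) y = (\<Sum>x\<in>X. f x y)"
  by (induction X rule: infinite_finite_induct) auto

lemma sum_lessThan_8:
  "(\<Sum>r<(8::nat). f r) = f 0 + f 1 + f 2 + f 3 + f 4 + f 5 + f 6 + (f 7 :: 'a::comm_monoid_add)"
  by (simp add: numeral_eq_Suc ac_simps)

definition basis_vec :: "nat \<Rightarrow> vec" where
  "basis_vec x = (\<lambda>y. if y = x then 1 else 0)"

lemma inj_basis_vec: "inj basis_vec"
  by (rule injI) (metis basis_vec_def zero_neq_one)

lemma vec_eq_sum_basis_vec:
  assumes "finite X" "\<And>y. y \<notin> X \<Longrightarrow> v y = 0"
  shows "v = (\<Sum>x\<in>X. scl (v x) (basis_vec x))"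
proof
  fix y
  have "(\<Sum>x\<in>X. scl (v x) (basis_vec x)) y = (\<Sum>x\<in>X. if y = x then v x else 0)"
    by (simp add: sum_vec_apply basis_vec_def if_distrib cong: if_cong)
  also have "\<dots> = v y"
    using assms by (simp add: sum.delta)
  finally show "v y = (\<Sum>x\<in>X. scl (v x) (basis_vec x)) y" by simp
qed

lemma in_span_basis_vec:
  assumes "finite X" "\<And>y. y \<notin> X \<Longrightarrow> v y = 0"
  shows "v \<in> vspan (basis_vec ` X)"
proof -
  have "(\<Sum>x\<in>X. scl (v x) (basis_vec x)) \<in> vspan (basis_vec ` X)"
    by (intro V.span_sum V.span_scale V.span_base imageI)
  then show ?thesis
    using vec_eq_sum_basis_vec[OF assms] by simp
qed

lemma independent_basis_vec:
  assumes "finite X"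
  shows "V.independent (basis_vec ` X)"
proof (rule V.independent_if_scalars_zero)
  show "finite (basis_vec ` X)" using assms by simp
  fix f x assume s: "(\<Sum>v\<in>basis_vec ` X. scl (f v) v) = 0" and x: "x \<in> basis_vec ` X"
  then obtain y where y: "y \<in> X" "x = basis_vec y" by blast
  have "0 = (\<Sum>v\<in>basis_vec ` X. scl (f v) v) y" using s by simp
  also have "\<dots> = (\<Sum>z\<in>X. f (basis_vec z) * basis_vec z y)"
    by (simp add: sum_vec_apply sum.reindex inj_on_subset[OF inj_basis_vec])
  also have "\<dots> = (\<Sum>z\<in>X. if y = z then f (basis_vec z) else 0)"
    by (rule sum.cong) (auto simp: basis_vec_def)
  also have "\<dots> = f x" using assms y by simp
  finally show "f x = 0" ..
qed

definition linear_on :: "vec set \<Rightarrow> (vec \<Rightarrow> vec) \<Rightarrow> bool" where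
  "linear_on L f \<longleftrightarrow>
     (\<forall>x\<in>L. \<forall>y\<in>L. f (x + y) = f x + f y) \<and> (\<forall>x\<in>L. \<forall>c. f (scl c x) = scl c (f x))"

lemma linear_on_add: "linear_on L f \<Longrightarrow> x \<in> L \<Longrightarrow> y \<in> L \<Longrightarrow> f (x + y) = f x + f y"
  by (simp add: linear_on_def)

lemma linear_on_scl: "linear_on L f \<Longrightarrow> x \<in> L \<Longrightarrow> f (scl c x) = scl c (f x)"
  by (simp add: linear_on_def)

lemma linear_on_zero:
  assumes "vsubspace L" "linear_on L f"
  shows "f 0 = 0"
  using linear_on_scl[OF assms(2) V.subspace_0[OF assms(1)], of 0] by simp

lemma linear_on_sum:
  assumes L: "vsubspace L" and f: "linear_on L f" and "finite X" "\<And>x. x \<in> X \<Longrightarrow> g x \<in> L"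
  shows "f (sum g X) = (\<Sum>x\<in>X. f (g x))"
  using assms(3,4)
proof (induction X rule: finite_induct)
  case empty
  show ?case using linear_on_zero[OF L f] by (simp only: sum.empty)
next
  case (insert a X)
  have "sum g X \<in> L" using insert by (intro V.subspace_sum[OF L]) auto
  then have "f (g a + sum g X) = f (g a) + f (sum g X)"
    using insert.prems by (intro linear_on_add[OF f]) auto
  moreover have "f (sum g X) = (\<Sum>x\<in>X. f (g x))"
    using insert.IH insert.prems by blast
  ultimately show ?case
    by (simp only: sum.insert[OF insert(1,2)])
qed

lemma linear_on_span_into:
  assumes L: "vsubspace L" and f: "linear_on L f" and S: "vsubspace S"
    and B: "B \<subseteq> L" "\<And>b. b \<in> B \<Longrightarrow> f b \<in> S" and v: "v \<in> vspan B"
  shows "f v \<in> S"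
proof -
  have "vsubspace {v \<in> L. f v \<in> S}"
    using L S linear_on_zero[OF L f] linear_on_add[OF f] linear_on_scl[OF f]
    by (auto simp: V.subspace_def)
  then have "vspan B \<subseteq> {v \<in> L. f v \<in> S}"
    using B by (intro V.span_minimal) auto
  then show ?thesis using v by blast
qed

lemma lie_algebra_subspace: "lie_algebra L br \<Longrightarrow> vsubspace L"
  unfolding lie_algebra_def by blast

lemma lie_algebra_closed: "lie_algebra L br \<Longrightarrow> x \<in> L \<Longrightarrow> y \<in> L \<Longrightarrow> br x y \<in> L"
  unfolding lie_algebra_def by blast

lemma lie_algebra_add_left:
  "lie_algebra L br \<Longrightarrow> x \<in> L \<Longrightarrow> y \<in> L \<Longrightarrow> z \<in> L \<Longrightarrow> br (x + y) z = br x z + br y z"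
  unfolding lie_algebra_def by blast

lemma lie_algebra_add_right:
  "lie_algebra L br \<Longrightarrow> x \<in> L \<Longrightarrow> y \<in> L \<Longrightarrow> z \<in> L \<Longrightarrow> br z (x + y) = br z x + br z y"
  unfolding lie_algebra_def by blast

lemma lie_algebra_self: "lie_algebra L br \<Longrightarrow> x \<in> L \<Longrightarrow> br x x = 0"
  unfolding lie_algebra_def by blast

lemma lie_algebra_zero_left:
  assumes L: "lie_algebra L br" and x: "x \<in> L"
  shows "br 0 x = 0"
proof -
  have z: "0 \<in> L" using V.subspace_0[OF lie_algebra_subspace[OF L]] .
  have "br (0 + 0) x = br 0 x + br 0 x" by (rule lie_algebra_add_left[OF L z z x])
  then show ?thesis by simp
qed

lemma lie_algebra_zero_right:
  assumes L: "lie_algebra L br" and x: "x \<in> L"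
  shows "br x 0 = 0"
proof -
  have z: "0 \<in> L" using V.subspace_0[OF lie_algebra_subspace[OF L]] .
  have "br x (0 + 0) = br x 0 + br x 0" by (rule lie_algebra_add_right[OF L z z x])
  then show ?thesis by simp
qed

lemma lie_algebra_antisym:
  assumes L: "lie_algebra L br" and x: "x \<in> L" and y: "y \<in> L"
  shows "br x y = - br y x"
proof -
  have xy: "x + y \<in> L" using V.subspace_add[OF lie_algebra_subspace[OF L] x y] .
  have "0 = br (x + y) (x + y)" using lie_algebra_self[OF L xy] ..
  also have "\<dots> = br x x + br x y + (br y x + br y y)"
    using L x y xy by (simp only: lie_algebra_add_left lie_algebra_add_right add.assoc)
  also have "\<dots> = br x y + br y x"
    by (simp only: lie_algebra_self[OF L x] lie_algebra_self[OF L y] add_0_left add_0_right)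
  finally show ?thesis by (simp add: eq_neg_iff_add_eq_0)
qed

lemma derivation_linear_on: "D \<in> derivations L br \<Longrightarrow> linear_on L D"
  by (simp add: derivations_def linear_on_def)

lemma derivation_closed: "D \<in> derivations L br \<Longrightarrow> x \<in> L \<Longrightarrow> D x \<in> L"
  by (simp add: derivations_def)

lemma derivation_leibniz:
  "D \<in> derivations L br \<Longrightarrow> x \<in> L \<Longrightarrow> y \<in> L \<Longrightarrow> D (br x y) = br (D x) y + br x (D y)"
  by (simp add: derivations_def)

lemma zero_in_char_seq:
  assumes L: "lie_algebra L br"
  shows "0 \<in> char_seq L br r"
proof (induction r)
  case 0
  show ?case using V.subspace_0[OF lie_algebra_subspace[OF L]] by (simp only: char_seq.simps)
next
  case (Suc r)
  have "(\<lambda>_. 0) \<in> derivations L br"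
    using V.subspace_0[OF lie_algebra_subspace[OF L]] lie_algebra_zero_left[OF L]
      lie_algebra_zero_right[OF L] by (simp add: derivations_def)
  then show ?case
    using Suc by (simp only: char_seq.simps)
      (intro CollectI exI[of _ "\<lambda>_. 0"] exI[of _ 0] conjI, simp_all add: fun_eq_iff)
qed

lemma derivation_center:
  assumes L: "lie_algebra L br" and D: "D \<in> derivations L br" and z: "z \<in> center L br"
  shows "D z \<in> center L br"
proof -
  have zL: "z \<in> L" using z by (simp add: center_def)
  have "br (D z) y = 0" if y: "y \<in> L" for y
  proof -
    have "0 = D (br z y)"
      using z y linear_on_zero[OF lie_algebra_subspace[OF L] derivation_linear_on[OF D]]
      by (simp add: center_def)
    also have "\<dots> = br (D z) y"
      using derivation_leibniz[OF D zL y] z derivation_closed[OF D y] by (simp add: center_def)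
    finally show ?thesis ..
  qed
  then show ?thesis using derivation_closed[OF D zL] by (simp add: center_def)
qed

lemma lie_ideal_bracket_right:
  assumes L: "lie_algebra L br" and I: "lie_ideal L br I" and x: "x \<in> L" and y: "y \<in> I"
  shows "br y x \<in> I"
proof -
  have "br x y \<in> I" using I x y by (simp add: lie_ideal_def)
  then have "- br x y \<in> I" using I V.subspace_neg by (auto simp: lie_ideal_def)
  moreover have "y \<in> L" using I y by (auto simp: lie_ideal_def)
  ultimately show ?thesis using lie_algebra_antisym[OF L _ x] by simp
qed

definition ideal_decomposition ::
    "vec set \<Rightarrow> (vec \<Rightarrow> vec \<Rightarrow> vec) \<Rightarrow> vec set \<Rightarrow> vec set \<Rightarrow> bool" where
  "ideal_decomposition L br I J \<longleftrightarrow> lie_ideal L br I \<and> lie_ideal L br J \<and> I \<inter> J = {0} \<and>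
     {a + b | a b. a \<in> I \<and> b \<in> J} = L"

lemma nonsplit_iff:
  "nonsplit L br \<longleftrightarrow> \<not> (\<exists>I J. ideal_decomposition L br I J \<and> I \<noteq> {0} \<and> J \<noteq> {0})"
  unfolding nonsplit_def ideal_decomposition_def by blast

lemma ideal_decomposition_sym:
  "ideal_decomposition L br I J \<Longrightarrow> ideal_decomposition L br J I"
  unfolding ideal_decomposition_def by (auto; metis add.commute)

lemma ideal_decompositionD:
  assumes "ideal_decomposition L br I J"
  shows "lie_ideal L br I" "vsubspace I" "I \<subseteq> L" "I \<inter> J = {0}"
  using assms by (auto simp: ideal_decomposition_def lie_ideal_def)

lemma ideal_decomposition_bracket_zero:
  assumes L: "lie_algebra L br" and dec: "ideal_decomposition L br I J"
    and a: "a \<in> I" and b: "b \<in> J"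
  shows "br a b = 0"
proof -
  note decI = ideal_decompositionD[OF dec]
  note decJ = ideal_decompositionD[OF ideal_decomposition_sym[OF dec]]
  have "br a b \<in> J" using decJ(1) a decI(3) b by (auto simp: lie_ideal_def)
  moreover have "br a b \<in> I" using lie_ideal_bracket_right[OF L decI(1) _ a] b decJ(3) by blast
  ultimately show ?thesis using decI(4) by blast
qed

definition ideal_proj :: "vec set \<Rightarrow> vec set \<Rightarrow> vec \<Rightarrow> vec" where
  "ideal_proj I J v = (SOME a. a \<in> I \<and> v - a \<in> J)"

context
  fixes L br I J
  assumes L: "lie_algebra L br" and dec: "ideal_decomposition L br I J"
begin

private lemmas decI = ideal_decompositionD[OF dec]
private lemmas decJ = ideal_decompositionD[OF ideal_decomposition_sym[OF dec]]

lemma ideal_proj_mem: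
  assumes "v \<in> L"
  shows "ideal_proj I J v \<in> I" "v - ideal_proj I J v \<in> J"
proof -
  obtain a b where "a \<in> I" "b \<in> J" "v = a + b"
    using dec assms by (auto simp: ideal_decomposition_def)
  then have "\<exists>a. a \<in> I \<and> v - a \<in> J" by (intro exI[of _ a]) simp
  then have "ideal_proj I J v \<in> I \<and> v - ideal_proj I J v \<in> J"
    unfolding ideal_proj_def by (rule someI_ex)
  then show "ideal_proj I J v \<in> I" "v - ideal_proj I J v \<in> J" by auto
qed

lemma ideal_proj_unique:
  assumes v: "v \<in> L" and a: "a \<in> I" "v - a \<in> J"
  shows "ideal_proj I J v = a"
proof -
  note p = ideal_proj_mem[OF v]
  have "a - ideal_proj I J v = (v - ideal_proj I J v) - (v - a)" by simp
  then have "a - ideal_proj I J v \<in> J"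
    using V.subspace_diff[OF decJ(2) p(2) a(2)] by simp
  moreover have "a - ideal_proj I J v \<in> I"
    using V.subspace_diff[OF decI(2) a(1) p(1)] .
  ultimately have "a - ideal_proj I J v = 0" using decI(4) by blast
  then show ?thesis by simp
qed

lemma ideal_proj_eq_self: "v \<in> I \<Longrightarrow> ideal_proj I J v = v"
  using decI decJ V.subspace_0 by (intro ideal_proj_unique) auto

lemma ideal_proj_eq_zero: "v \<in> J \<Longrightarrow> ideal_proj I J v = 0"
  using decI decJ V.subspace_0 by (intro ideal_proj_unique) auto

lemma ideal_proj_closed: "v \<in> L \<Longrightarrow> ideal_proj I J v \<in> L"
  using ideal_proj_mem decI by blast

lemma linear_on_ideal_proj: "linear_on L (ideal_proj I J)"
  unfolding linear_on_def
proof (intro conjI ballI allI)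
  fix x y assume x: "x \<in> L" and y: "y \<in> L"
  note px = ideal_proj_mem[OF x] and py = ideal_proj_mem[OF y]
  have eq: "x + y - (ideal_proj I J x + ideal_proj I J y) =
      (x - ideal_proj I J x) + (y - ideal_proj I J y)" by simp
  have "x + y - (ideal_proj I J x + ideal_proj I J y) \<in> J"
    unfolding eq by (rule V.subspace_add[OF decJ(2) px(2) py(2)])
  moreover have "x + y \<in> L" using V.subspace_add[OF lie_algebra_subspace[OF L] x y] .
  ultimately show "ideal_proj I J (x + y) = ideal_proj I J x + ideal_proj I J y"
    using V.subspace_add[OF decI(2) px(1) py(1)] by (intro ideal_proj_unique)
next
  fix x c assume x: "x \<in> L"
  have "scl c x - scl c (ideal_proj I J x) = scl c (x - ideal_proj I J x)"
    by (simp add: fun_eq_iff algebra_simps)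
  then show "ideal_proj I J (scl c x) = scl c (ideal_proj I J x)"
    using ideal_proj_mem[OF x] decI(2) decJ(2) x lie_algebra_subspace[OF L]
    by (intro ideal_proj_unique) (auto intro: V.subspace_scale)
qed

lemma ideal_proj_bracket_left:
  assumes x: "x \<in> L" and y: "y \<in> L"
  shows "ideal_proj I J (br x y) = br (ideal_proj I J x) y"
proof (rule ideal_proj_unique)
  note px = ideal_proj_mem[OF x]
  show "br x y \<in> L" using lie_algebra_closed[OF L x y] .
  show "br (ideal_proj I J x) y \<in> I" using lie_ideal_bracket_right[OF L decI(1) y px(1)] .
  have "br x y = br (ideal_proj I J x + (x - ideal_proj I J x)) y" by simp
  also have "\<dots> = br (ideal_proj I J x) y + br (x - ideal_proj I J x) y"
    using px decI(3) decJ(3) by (intro lie_algebra_add_left[OF L _ _ y]) auto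
  finally have "br x y = br (ideal_proj I J x) y + br (x - ideal_proj I J x) y" .
  moreover have "br (x - ideal_proj I J x) y \<in> J"
    using lie_ideal_bracket_right[OF L decJ(1) y px(2)] .
  ultimately show "br x y - br (ideal_proj I J x) y \<in> J" by simp
qed

lemma ideal_proj_bracket:
  assumes x: "x \<in> L" and y: "y \<in> L"
  shows "ideal_proj I J (br x y) = br (ideal_proj I J x) (ideal_proj I J y)"
proof -
  note px = ideal_proj_mem[OF x] and py = ideal_proj_mem[OF y]
  have "br (ideal_proj I J x) y = br (ideal_proj I J x) (ideal_proj I J y + (y - ideal_proj I J y))"
    by simp
  also have "\<dots> =
      br (ideal_proj I J x) (ideal_proj I J y) + br (ideal_proj I J x) (y - ideal_proj I J y)"
    using px py decI(3) decJ(3) by (intro lie_algebra_add_right[OF L]) auto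
  finally have "br (ideal_proj I J x) y =
      br (ideal_proj I J x) (ideal_proj I J y) + br (ideal_proj I J x) (y - ideal_proj I J y)" .
  moreover have "br (ideal_proj I J x) (y - ideal_proj I J y) = 0"
    using ideal_decomposition_bracket_zero[OF L dec px(1) py(2)] .
  ultimately show ?thesis using ideal_proj_bracket_left[OF x y] by simp
qed

lemma ideal_proj_bracket_right:
  assumes x: "x \<in> L" and y: "y \<in> L"
  shows "ideal_proj I J (br x y) = br x (ideal_proj I J y)"
proof -
  note px = ideal_proj_mem[OF x] and py = ideal_proj_mem[OF y]
  have "br x (ideal_proj I J y) = br (ideal_proj I J x + (x - ideal_proj I J x)) (ideal_proj I J y)"
    by simp
  also have "\<dots> =
      br (ideal_proj I J x) (ideal_proj I J y) + br (x - ideal_proj I J x) (ideal_proj I J y)"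
    using px py decI(3) decJ(3) by (intro lie_algebra_add_left[OF L]) auto
  finally have "br x (ideal_proj I J y) =
      br (ideal_proj I J x) (ideal_proj I J y) + br (x - ideal_proj I J x) (ideal_proj I J y)" .
  moreover have "br (x - ideal_proj I J x) (ideal_proj I J y) = 0"
    using ideal_decomposition_bracket_zero[OF L ideal_decomposition_sym[OF dec] px(2) py(1)] .
  ultimately show ?thesis using ideal_proj_bracket[OF x y] by simp
qed

lemma ideal_proj_center:
  assumes z: "z \<in> center L br"
  shows "ideal_proj I J z \<in> center L br"
proof -
  have zL: "z \<in> L" using z by (simp add: center_def)
  have "br (ideal_proj I J z) y = 0" if y: "y \<in> L" for y
    using ideal_proj_bracket_left[OF zL y] z y
      linear_on_zero[OF lie_algebra_subspace[OF L] linear_on_ideal_proj]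
    by (simp add: center_def)
  then show ?thesis using ideal_proj_closed[OF zL] by (simp add: center_def)
qed

end

section \<open>The algebras \<open>k\<close> and \<open>h\<^sub>N\<close>\<close>

definition wedge :: "vec \<Rightarrow> vec \<Rightarrow> nat \<Rightarrow> nat \<Rightarrow> complex" where
  "wedge u v p q = u p * v q - u q * v p"

text \<open>In the standard basis: \<open>[e\<^sub>0, e\<^sub>1] = e\<^sub>4\<close>, \<open>[e\<^sub>2, e\<^sub>3] = -e\<^sub>4\<close>,
  \<open>[e\<^sub>0, e\<^sub>2] = [e\<^sub>1, e\<^sub>3] = e\<^sub>5\<close>, \<open>[e\<^sub>0, e\<^sub>3] = e\<^sub>6\<close>, \<open>[e\<^sub>1, e\<^sub>5] = [e\<^sub>2, e\<^sub>4] = -e\<^sub>6\<close>,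
  \<open>[e\<^sub>1, e\<^sub>2] = e\<^sub>7\<close>, \<open>[e\<^sub>0, e\<^sub>4] = [e\<^sub>3, e\<^sub>5] = -e\<^sub>7\<close>.\<close>

definition kbracket :: "vec \<Rightarrow> vec \<Rightarrow> vec" where
  "kbracket u v r =
    (if r = 4 then wedge u v 0 1 - wedge u v 2 3
     else if r = 5 then wedge u v 0 2 + wedge u v 1 3
     else if r = 6 then wedge u v 0 3 - wedge u v 1 5 - wedge u v 2 4
     else if r = 7 then wedge u v 1 2 - wedge u v 0 4 - wedge u v 3 5
     else 0)"

lemma kbracket_jacobi:
  "kbracket u (kbracket v w) + kbracket v (kbracket w u) + kbracket w (kbracket u v) = 0"
  by (rule ext) (simp add: kbracket_def wedge_def algebra_simps)

lemma kbracket_zero_left [simp]: "kbracket 0 v = 0"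
  and kbracket_zero_right [simp]: "kbracket u 0 = 0"
  by (simp_all add: fun_eq_iff kbracket_def wedge_def)

lemma kbracket_eq_0_outside: "s < 4 \<or> 8 \<le> s \<Longrightarrow> kbracket u v s = 0"
  by (auto simp: kbracket_def)

text \<open>In \<open>h\<^sub>N\<close> the coordinates \<open>8i, ..., 8i + 7\<close> hold the \<open>i\<close>-th copy of \<open>k\<close>
  and coordinate \<open>cross_index N i j\<close> holds \<open>a\<^sub>i\<^sub>j = [e\<^sub>8\<^sub>i, e\<^sub>8\<^sub>j]\<close> for \<open>i < j\<close>.\<close>

definition block :: "nat \<Rightarrow> vec \<Rightarrow> vec" where
  "block i u = (\<lambda>s. if s < 8 then u (8 * i + s) else 0)"

definition cross_index :: "nat \<Rightarrow> nat \<Rightarrow> nat \<Rightarrow> nat" where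
  "cross_index N i j = 8 * N + N * i + j"

definition hbracket :: "nat \<Rightarrow> vec \<Rightarrow> vec \<Rightarrow> vec" where
  "hbracket N u v x =
    (if x < 8 * N then kbracket (block (x div 8) u) (block (x div 8) v) (x mod 8)
     else let i = (x - 8 * N) div N; j = (x - 8 * N) mod N in
       if i < j \<and> j < N then wedge u v (8 * i) (8 * j) else 0)"

definition hindex :: "nat \<Rightarrow> nat set" where
  "hindex N = {x. x < 8 * N} \<union> {cross_index N i j | i j. i < j \<and> j < N}"

definition hspace :: "nat \<Rightarrow> vec set" where
  "hspace N = {v. \<forall>x. x \<notin> hindex N \<longrightarrow> v x = 0}"

lemma block_index: "(k::nat) < N \<Longrightarrow> s < 8 \<Longrightarrow> 8 * k + s < 8 * N"
  by linarith

lemma block_hbracket: "k < N \<Longrightarrow> block k (hbracket N u v) = kbracket (block k u) (block k v)"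
  by (rule ext) (auto simp: block_def hbracket_def block_index kbracket_eq_0_outside)

lemma block_add: "block k (u + v) = block k u + block k v"
  and block_scl: "block k (scl c u) = scl c (block k u)"
  and block_zero [simp]: "block k 0 = 0"
  and block_sum: "block k (sum g X) = (\<Sum>x\<in>X. block k (g x))"
  by (auto simp: block_def fun_eq_iff sum_vec_apply)

lemma cross_index_bound: "(i::nat) < N \<Longrightarrow> j < N \<Longrightarrow> N * i + j < N * N"
proof -
  assume "i < N" "j < N"
  then have "N * i + j < N * (i + 1)" by simp
  also have "\<dots> \<le> N * N" using \<open>i < N\<close> by (intro mult_le_mono2) simp
  finally show ?thesis .
qed

lemma cross_index_div_mod:
  assumes "j < N"
  shows "(cross_index N i j - 8 * N) div N = i" "(cross_index N i j - 8 * N) mod N = j"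
  using assms by (auto simp: cross_index_def)

lemma cross_index_inj:
  "j < N \<Longrightarrow> j' < N \<Longrightarrow> cross_index N i j = cross_index N i' j' \<longleftrightarrow> i = i' \<and> j = j'"
  using cross_index_div_mod by metis

lemma hbracket_cross_index:
  "i < j \<Longrightarrow> j < N \<Longrightarrow> hbracket N u v (cross_index N i j) = wedge u v (8 * i) (8 * j)"
  by (simp add: hbracket_def cross_index_def Let_def)

lemma finite_hindex: "finite (hindex N)"
proof (rule finite_subset)
  show "hindex N \<subseteq> {..< 8 * N + N * N}"
    using cross_index_bound by (fastforce simp: hindex_def cross_index_def)
qed simp

lemma hspace_subspace: "vsubspace (hspace N)"
  by (auto simp: V.subspace_def hspace_def)

lemma basis_vec_in_hspace: "x \<in> hindex N \<Longrightarrow> basis_vec x \<in> hspace N"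
  by (auto simp: hspace_def basis_vec_def)

lemma span_basis_vec_hindex: "vspan (basis_vec ` hindex N) = hspace N"
proof
  show "vspan (basis_vec ` hindex N) \<subseteq> hspace N"
    by (rule V.span_minimal) (auto simp: basis_vec_in_hspace hspace_subspace)
  show "hspace N \<subseteq> vspan (basis_vec ` hindex N)"
    by (auto intro!: in_span_basis_vec finite_hindex simp: hspace_def)
qed

lemma hbracket_in_hspace: "hbracket N u v \<in> hspace N"
proof -
  have "hbracket N u v x = 0" if x: "x \<notin> hindex N" for x
  proof -
    define i j where "i = (x - 8 * N) div N" and "j = (x - 8 * N) mod N"
    have "x \<ge> 8 * N" using x by (simp add: hindex_def)
    then have "x = cross_index N i j" by (simp add: cross_index_def i_def j_def)
    then have "\<not> (i < j \<and> j < N)" using x by (auto simp: hindex_def)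
    then show ?thesis using \<open>x \<ge> 8 * N\<close> by (auto simp: hbracket_def Let_def i_def j_def)
  qed
  then show ?thesis by (simp add: hspace_def)
qed

lemma hspace_eqI:
  assumes "u \<in> hspace N" "v \<in> hspace N" "\<And>k. k < N \<Longrightarrow> block k u = block k v"
    "\<And>i j. i < j \<Longrightarrow> j < N \<Longrightarrow> u (cross_index N i j) = v (cross_index N i j)"
  shows "u = v"
proof
  fix x
  show "u x = v x"
  proof (cases "x \<in> hindex N")
    case False
    then show ?thesis using assms(1,2) by (simp add: hspace_def)
  next
    case True
    then consider "x < 8 * N" | i j where "i < j" "j < N" "x = cross_index N i j"
      by (auto simp: hindex_def)
    then show ?thesis
    proof cases
      case 1
      then have "block (x div 8) u (x mod 8) = block (x div 8) v (x mod 8)"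
        using assms(3)[of "x div 8"] by simp
      then show ?thesis by (simp add: block_def)
    qed (use assms(4) in simp)
  qed
qed

lemma hbracket_add_left: "hbracket N (u + v) w = hbracket N u w + hbracket N v w"
  and hbracket_add_right: "hbracket N w (u + v) = hbracket N w u + hbracket N w v"
  and hbracket_scl_left: "hbracket N (scl c u) w = scl c (hbracket N u w)"
  and hbracket_scl_right: "hbracket N w (scl c u) = scl c (hbracket N w u)"
  and hbracket_self: "hbracket N u u = 0"
  by (auto simp: fun_eq_iff hbracket_def kbracket_def wedge_def block_def Let_def algebra_simps)

lemma hbracket_block_start_eq_0: "i < N \<Longrightarrow> hbracket N u v (8 * i) = 0"
  using fun_cong[OF block_hbracket[of i N u v], of 0] by (simp add: block_def kbracket_def)

lemma hbracket_jacobi: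
  "hbracket N u (hbracket N v w) + hbracket N v (hbracket N w u) +
    hbracket N w (hbracket N u v) = 0"
proof (rule hspace_eqI[of _ N])
  show "hbracket N u (hbracket N v w) + hbracket N v (hbracket N w u) +
      hbracket N w (hbracket N u v) \<in> hspace N"
    using hspace_subspace hbracket_in_hspace by (meson V.subspace_add)
  show "0 \<in> hspace N" by (simp add: hspace_def)
  fix k assume "k < N"
  then show "block k (hbracket N u (hbracket N v w) + hbracket N v (hbracket N w u)
      + hbracket N w (hbracket N u v)) = block k 0"
    using kbracket_jacobi by (simp add: block_add block_hbracket)
next
  fix i j assume "i < j" "j < N"
  then show "(hbracket N u (hbracket N v w) + hbracket N v (hbracket N w u)
      + hbracket N w (hbracket N u v)) (cross_index N i j) = 0 (cross_index N i j)"
    by (simp add: hbracket_cross_index wedge_def hbracket_block_start_eq_0)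
qed

lemma lie_algebra_hspace: "lie_algebra (hspace N) (hbracket N)"
  unfolding lie_algebra_def
proof (intro conjI ballI allI)
  show "\<exists>B. finite B \<and> B \<subseteq> hspace N \<and> vspan B = hspace N"
    by (intro exI[of _ "basis_vec ` hindex N"])
      (auto simp: finite_hindex basis_vec_in_hspace span_basis_vec_hindex)
qed (auto simp: hspace_subspace hbracket_in_hspace hbracket_add_left hbracket_add_right
  hbracket_scl_left hbracket_scl_right hbracket_self hbracket_jacobi)

lemma block_in_hindex: "i < N \<Longrightarrow> p < 8 \<Longrightarrow> 8 * i + p \<in> hindex N"
  using block_index by (simp add: hindex_def)

lemma cross_index_in_hindex: "i < j \<Longrightarrow> j < N \<Longrightarrow> cross_index N i j \<in> hindex N"
  by (auto simp: hindex_def)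

lemma basis_vec_block_in_hspace: "i < N \<Longrightarrow> p < 8 \<Longrightarrow> basis_vec (8 * i + p) \<in> hspace N"
  by (intro basis_vec_in_hspace block_in_hindex)

lemma block_basis_vec_same: "p < 8 \<Longrightarrow> block i (basis_vec (8 * i + p)) = basis_vec p"
  by (auto simp: block_def basis_vec_def fun_eq_iff)

lemma block_basis_vec_other: "k \<noteq> i \<Longrightarrow> p < 8 \<Longrightarrow> block k (basis_vec (8 * i + p)) = 0"
  by (auto simp: block_def basis_vec_def fun_eq_iff)

lemma block_basis_vec_cross: "k < N \<Longrightarrow> block k (basis_vec (cross_index N i j)) = 0"
  by (auto simp: block_def basis_vec_def fun_eq_iff cross_index_def)

lemma hbracket_same_block:
  assumes i: "i < N" and p: "p < 8" and q: "q < 8"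
  shows "hbracket N (basis_vec (8 * i + p)) (basis_vec (8 * i + q)) =
    (\<Sum>r<8. scl (kbracket (basis_vec p) (basis_vec q) r) (basis_vec (8 * i + r)))"
proof (rule hspace_eqI[of _ N])
  show "(\<Sum>r<8. scl (kbracket (basis_vec p) (basis_vec q) r) (basis_vec (8 * i + r))) \<in> hspace N"
    using i by (intro V.subspace_sum[OF hspace_subspace] V.subspace_scale[OF hspace_subspace]
        basis_vec_block_in_hspace) auto
  fix k assume k: "k < N"
  have "kbracket (basis_vec p) (basis_vec q) =
      (\<Sum>r<8. scl (kbracket (basis_vec p) (basis_vec q) r) (basis_vec r))"
    by (rule vec_eq_sum_basis_vec) (auto simp: kbracket_eq_0_outside)
  then show "block k (hbracket N (basis_vec (8 * i + p)) (basis_vec (8 * i + q))) =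
      block k (\<Sum>r<8. scl (kbracket (basis_vec p) (basis_vec q) r) (basis_vec (8 * i + r)))"
    using k p q by (cases "k = i")
      (simp_all add: block_hbracket block_sum block_scl block_basis_vec_same block_basis_vec_other)
next
  fix i' j' assume ij: "i' < j'" "j' < N"
  have "basis_vec (8 * i + r) (cross_index N i' j') = 0" if "r < 8" for r
    using i that by (auto simp: basis_vec_def cross_index_def)
  then show "hbracket N (basis_vec (8 * i + p)) (basis_vec (8 * i + q)) (cross_index N i' j') =
      (\<Sum>r<8. scl (kbracket (basis_vec p) (basis_vec q) r) (basis_vec (8 * i + r)))
        (cross_index N i' j')"
    using ij p q by (simp add: hbracket_cross_index wedge_def sum_vec_apply basis_vec_def)
qed (rule hbracket_in_hspace)

lemma hbracket_cross:
  assumes "i < j" "j < N"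
  shows "hbracket N (basis_vec (8 * i)) (basis_vec (8 * j)) = basis_vec (cross_index N i j)"
proof (rule hspace_eqI[of _ N])
  show "basis_vec (cross_index N i j) \<in> hspace N"
    using assms by (intro basis_vec_in_hspace cross_index_in_hindex)
  fix k assume k: "k < N"
  have "block k (basis_vec (8 * i)) = 0 \<or> block k (basis_vec (8 * j)) = 0"
    using block_basis_vec_other[of k i 0] block_basis_vec_other[of k j 0] assms by auto
  then show "block k (hbracket N (basis_vec (8 * i)) (basis_vec (8 * j))) =
      block k (basis_vec (cross_index N i j))"
    using k by (auto simp: block_hbracket block_basis_vec_cross kbracket_def wedge_def)
next
  fix i' j' assume "i' < j'" "j' < N"
  then show "hbracket N (basis_vec (8 * i)) (basis_vec (8 * j)) (cross_index N i' j') =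
      basis_vec (cross_index N i j) (cross_index N i' j')"
    using assms cross_index_inj[of j N j' i i']
    by (auto simp: hbracket_cross_index wedge_def basis_vec_def)
qed (rule hbracket_in_hspace)

lemma hbracket_generators:
  assumes "i < N"
  shows "hbracket N (basis_vec (8 * i)) (basis_vec (8 * i + 1)) = basis_vec (8 * i + 4)"
    and "hbracket N (basis_vec (8 * i)) (basis_vec (8 * i + 2)) = basis_vec (8 * i + 5)"
    and "hbracket N (basis_vec (8 * i + 5)) (basis_vec (8 * i + 1)) = basis_vec (8 * i + 6)"
    and "hbracket N (basis_vec (8 * i + 4)) (basis_vec (8 * i)) = basis_vec (8 * i + 7)"
  using hbracket_same_block[OF assms, of 0 1] hbracket_same_block[OF assms, of 0 2]
    hbracket_same_block[OF assms, of 5 1] hbracket_same_block[OF assms, of 4 0]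
  by (simp_all add: sum_lessThan_8 kbracket_def wedge_def basis_vec_def)

lemma center_hspace_block:
  assumes z: "z \<in> center (hspace N) (hbracket N)" and k: "k < N" and r: "r < 8"
  shows "kbracket (block k z) (basis_vec r) = 0"
proof -
  have "hbracket N z (basis_vec (8 * k + r)) = 0"
    using z basis_vec_block_in_hspace[OF k r] by (simp add: center_def)
  then have "block k (hbracket N z (basis_vec (8 * k + r))) = 0" by simp
  then show ?thesis using k r by (simp add: block_hbracket block_basis_vec_same)
qed

lemma in_center_hspace_if_blocks_zero:
  assumes z: "z \<in> hspace N" and blocks: "\<And>k. k < N \<Longrightarrow> block k z = 0"
  shows "z \<in> center (hspace N) (hbracket N)"
proof -
  have z0: "z (8 * k) = 0" if "k < N" for k
    using fun_cong[OF blocks[OF that], of 0] by (simp add: block_def)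
  have "hbracket N z y = 0" for y
  proof (rule hspace_eqI[of _ N])
    show "hbracket N z y \<in> hspace N" by (rule hbracket_in_hspace)
    show "0 \<in> hspace N" by (simp add: hspace_def)
    fix k assume "k < N"
    then show "block k (hbracket N z y) = block k 0" using blocks by (simp add: block_hbracket)
  next
    fix i j assume "i < j" "j < N"
    then show "hbracket N z y (cross_index N i j) = 0 (cross_index N i j)"
      using z0 by (simp add: hbracket_cross_index wedge_def)
  qed
  then show ?thesis using z by (simp add: center_def)
qed

lemma hbracket_other_blocks_center:
  assumes "i < N" "j < N" "i \<noteq> j" "p < 8" "q < 8"
  shows "hbracket N (basis_vec (8 * i + p)) (basis_vec (8 * j + q))
    \<in> center (hspace N) (hbracket N)"
proof (rule in_center_hspace_if_blocks_zero[OF hbracket_in_hspace])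
  fix k assume "k < N"
  moreover have "block k (basis_vec (8 * i + p)) = 0 \<or> block k (basis_vec (8 * j + q)) = 0"
    using block_basis_vec_other[of k i p] block_basis_vec_other[of k j q] assms by auto
  ultimately show "block k (hbracket N (basis_vec (8 * i + p)) (basis_vec (8 * j + q))) = 0"
    by (auto simp: block_hbracket)
qed

section \<open>The weight filtration\<close>

definition kweight :: "nat \<Rightarrow> nat" where
  "kweight s = (if s < 4 then 1 else if s < 6 then 2 else 3)"

definition hweight :: "nat \<Rightarrow> nat \<Rightarrow> nat" where
  "hweight N x = (if x < 8 * N then kweight (x mod 8) else 2)"

definition hfilt :: "nat \<Rightarrow> nat \<Rightarrow> vec set" where
  "hfilt N r = {v \<in> hspace N. \<forall>x. hweight N x < r \<longrightarrow> v x = 0}"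

lemma hweight_block: "i < N \<Longrightarrow> s < 8 \<Longrightarrow> hweight N (8 * i + s) = kweight s"
  using block_index by (simp add: hweight_def)

lemma hfilt_subspace: "vsubspace (hfilt N r)"
  by (auto simp: V.subspace_def hfilt_def hspace_def)

lemma hfilt_antimono: "r \<le> r' \<Longrightarrow> hfilt N r' \<subseteq> hfilt N r"
  by (auto simp: hfilt_def)

lemma hfilt_1: "hfilt N 1 = hspace N"
  by (auto simp: hfilt_def hweight_def kweight_def)

lemma hfilt_4: "hfilt N 4 = {0}"
  by (auto simp: hfilt_def hspace_def hweight_def kweight_def fun_eq_iff)

lemma basis_vec_in_hfilt: "x \<in> hindex N \<Longrightarrow> basis_vec x \<in> hfilt N (hweight N x)"
  by (simp add: hfilt_def basis_vec_in_hspace) (simp add: basis_vec_def)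

lemma hfilt_eq_span: "hfilt N r = vspan (basis_vec ` {x \<in> hindex N. r \<le> hweight N x})"
proof
  show "hfilt N r \<subseteq> vspan (basis_vec ` {x \<in> hindex N. r \<le> hweight N x})"
    by (auto intro!: in_span_basis_vec finite_subset[OF _ finite_hindex] simp: hfilt_def hspace_def)
  show "vspan (basis_vec ` {x \<in> hindex N. r \<le> hweight N x}) \<subseteq> hfilt N r"
    using basis_vec_in_hfilt hfilt_antimono by (intro V.span_minimal hfilt_subspace) blast
qed

lemma kbracket_weight:
  assumes "\<And>p. kweight p < a \<Longrightarrow> u p = 0" and "\<And>q. kweight q < b \<Longrightarrow> v q = 0"
    and "kweight s < a + b"
  shows "kbracket u v s = 0"
proof -
  have uv: "u p * v q = 0" if "kweight p + kweight q < a + b" for p q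
    using assms(1,2) that by (cases "kweight p < a") auto
  show ?thesis
    using assms(3) by (auto simp: kbracket_def wedge_def kweight_def uv)
qed

lemma block_hfilt: "u \<in> hfilt N a \<Longrightarrow> k < N \<Longrightarrow> kweight p < a \<Longrightarrow> block k u p = 0"
  by (auto simp: block_def hfilt_def hweight_block)

lemma hbracket_hfilt:
  assumes u: "u \<in> hfilt N a" and v: "v \<in> hfilt N b"
  shows "hbracket N u v \<in> hfilt N (a + b)"
proof -
  have "hbracket N u v x = 0" if x: "hweight N x < a + b" for x
  proof (cases "x < 8 * N")
    case True
    then have k: "x div 8 < N" by simp
    have "hbracket N u v x = kbracket (block (x div 8) u) (block (x div 8) v) (x mod 8)"
      using True by (simp add: hbracket_def)
    also have "\<dots> = 0"
      using True x block_hfilt[OF u k] block_hfilt[OF v k]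
      by (intro kbracket_weight[of a _ b]) (auto simp: hweight_def)
    finally show ?thesis .
  next
    case False
    show ?thesis
    proof (cases "x \<in> hindex N")
      case True
      with False obtain i j where ij: "i < j" "j < N" "x = cross_index N i j"
        by (auto simp: hindex_def)
      have "2 < a + b" using x False by (simp add: hweight_def)
      moreover have "hweight N (8 * i) = 1" "hweight N (8 * j) = 1"
        using ij by (auto simp: hweight_def kweight_def)
      ultimately have "u (8 * i) = 0 \<and> u (8 * j) = 0 \<or> v (8 * i) = 0 \<and> v (8 * j) = 0"
        using u v by (cases "2 \<le> a") (auto simp: hfilt_def)
      then show ?thesis using ij by (auto simp: hbracket_cross_index wedge_def)
    next
      case False
      then show ?thesis using hbracket_in_hspace[of N u v] by (simp add: hspace_def)
    qed
  qed
  then show ?thesis using hbracket_in_hspace by (simp add: hfilt_def)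
qed

lemma lcs_subset_hfilt: "lcs (hspace N) (hbracket N) r \<subseteq> hfilt N (Suc r)"
proof (induction r)
  case 0
  then show ?case using hfilt_1 by simp
next
  case (Suc r)
  have "hbracket N x y \<in> hfilt N (Suc (Suc r))"
    if "x \<in> hspace N" "y \<in> lcs (hspace N) (hbracket N) r" for x y
    using hbracket_hfilt[of x N 1 y "Suc r"] that Suc hfilt_1 by auto
  then show ?case unfolding lcs.simps by (intro V.span_minimal hfilt_subspace) blast
qed

lemma nilpotent_hspace: "nilpotent_lie (hspace N) (hbracket N)"
proof -
  have "lcs (hspace N) (hbracket N) 3 \<subseteq> {0}"
    using lcs_subset_hfilt[of N 3] hfilt_4 by (simp add: numeral_eq_Suc)
  moreover have "0 \<in> lcs (hspace N) (hbracket N) 3"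
    by (simp add: numeral_eq_Suc V.span_zero)
  ultimately show ?thesis unfolding nilpotent_lie_def by blast
qed

lemma hweight_ge_1: "1 \<le> hweight N x"
  by (simp add: hweight_def kweight_def)

lemma hweight_lt_2: "hweight N x < 2 \<Longrightarrow> x div 8 < N \<and> x mod 8 < 4"
  by (auto simp: hweight_def kweight_def split: if_splits)

lemma basis_vec_eq_hbracket:
  assumes x: "x \<in> hindex N" and w: "2 \<le> hweight N x"
  obtains y z where "y \<in> hindex N" "z \<in> hindex N" "hweight N y + hweight N z = hweight N x"
    "basis_vec x = hbracket N (basis_vec y) (basis_vec z)"
proof (cases "x < 8 * N")
  case True
  note rep = that
  define i s where "i = x div 8" and "s = x mod 8"
  have x_eq: "x = 8 * i + s" and i: "i < N" and s: "s < 8"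
    using True by (simp_all add: i_def s_def)
  have in_block: thesis if "p < 8" "q < 8" "kweight p + kweight q = kweight s"
    "hbracket N (basis_vec (8 * i + p)) (basis_vec (8 * i + q)) = basis_vec x" for p q
    using that block_in_hindex[OF i] hweight_block[OF i] x_eq s
    by (intro rep[of "8 * i + p" "8 * i + q"]) auto
  have "4 \<le> s" using w x_eq hweight_block[OF i s] by (simp add: kweight_def split: if_splits)
  then consider "s = 4" | "s = 5" | "s = 6" | "s = 7" using s by linarith
  then show ?thesis
  proof cases
    case 1 then show ?thesis
      using in_block[of 0 1] hbracket_generators(1)[OF i] x_eq by (simp add: kweight_def)
  next
    case 2 then show ?thesis
      using in_block[of 0 2] hbracket_generators(2)[OF i] x_eq by (simp add: kweight_def)
  next
    case 3 then show ?thesis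
      using in_block[of 5 1] hbracket_generators(3)[OF i] x_eq by (simp add: kweight_def)
  next
    case 4 then show ?thesis
      using in_block[of 4 0] hbracket_generators(4)[OF i] x_eq by (simp add: kweight_def)
  qed
next
  case False
  then obtain i j where ij: "i < j" "j < N" "x = cross_index N i j"
    using x by (auto simp: hindex_def)
  moreover have "8 * i \<in> hindex N" "8 * j \<in> hindex N"
    using block_in_hindex[of _ N 0] ij by simp_all
  moreover have "hweight N (8 * i) = 1" "hweight N (8 * j) = 1" "hweight N x = 2"
    using hweight_block[of _ N 0] ij False by (simp_all add: hweight_def kweight_def)
  ultimately show ?thesis
    using that[of "8 * i" "8 * j"] hbracket_cross[OF ij(1,2)] by simp
qed

lemma kbracket_centralizer_coords:
  assumes "\<And>q r. q < 8 \<Longrightarrow> r < 8 \<Longrightarrow> kbracket (kbracket u (basis_vec q)) (basis_vec r) = 0"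
    and "g < 4"
  shows "u g = 0"
proof -
  have "u 0 = 0 \<and> u 1 = 0 \<and> u 2 = 0 \<and> u 3 = 0"
    using fun_cong[OF assms(1)[of 1 0], of 7] fun_cong[OF assms(1)[of 0 0], of 7]
      fun_cong[OF assms(1)[of 0 1], of 6] fun_cong[OF assms(1)[of 1 1], of 6]
    by (simp add: kbracket_def wedge_def basis_vec_def)
  then show ?thesis using \<open>g < 4\<close> by (auto simp: less_Suc_eq numeral_eq_Suc)
qed

text \<open>The hypothesis says that the linear map \<open>e\<^sub>r \<mapsto> d r\<close> is a derivation of \<open>k\<close>, the
  conclusion that it maps the generators \<open>e\<^sub>0, ..., e\<^sub>3\<close> into the span of \<open>e\<^sub>4, ..., e\<^sub>7\<close>.\<close>

lemma kderivation_coords: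
  fixes d :: "nat \<Rightarrow> vec"
  assumes H: "\<And>p q. p < 8 \<Longrightarrow> q < 8 \<Longrightarrow>
      (\<Sum>r<8. scl (kbracket (basis_vec p) (basis_vec q) r) (d r)) =
      kbracket (d p) (basis_vec q) + kbracket (basis_vec p) (d q)"
    and "p < 4" "g < 4"
  shows "d p g = 0"
proof -
  have E: "(\<Sum>r<8. kbracket (basis_vec p) (basis_vec q) r * d r s) =
      kbracket (d p) (basis_vec q) s + kbracket (basis_vec p) (d q) s" if "p < 8" "q < 8" for p q s
    using fun_cong[OF H[OF that], of s] by (simp add: sum_vec_apply)
  have "d 0 0 = 0 \<and> d 0 1 = 0 \<and> d 0 2 = 0 \<and> d 0 3 = 0 \<and>
      d 1 0 = 0 \<and> d 1 1 = 0 \<and> d 1 2 = 0 \<and> d 1 3 = 0 \<and>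
      d 2 0 = 0 \<and> d 2 1 = 0 \<and> d 2 2 = 0 \<and> d 2 3 = 0 \<and>
      d 3 0 = 0 \<and> d 3 1 = 0 \<and> d 3 2 = 0 \<and> d 3 3 = 0"
    using E[of 1 0 6] E[of 1 0 7] E[of 2 0 4] E[of 2 1 6] E[of 2 1 7] E[of 3 0 6]
      E[of 3 0 7] E[of 3 1 5] E[of 3 2 4] E[of 3 2 5] E[of 3 2 6] E[of 3 2 7] E[of 4 0 6]
      E[of 4 0 7] E[of 4 1 4] E[of 4 1 5] E[of 4 1 6] E[of 4 1 7] E[of 4 2 6] E[of 4 2 7]
      E[of 4 3 4] E[of 4 3 5] E[of 4 3 6] E[of 4 3 7] E[of 5 0 4] E[of 5 0 5] E[of 5 0 6]
      E[of 5 0 7] E[of 5 1 6] E[of 5 1 7] E[of 5 2 4] E[of 5 2 5] E[of 5 2 6] E[of 5 2 7]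
      E[of 5 3 6] E[of 5 3 7]
    by (simp add: sum_lessThan_8 kbracket_def wedge_def basis_vec_def) algebra
  then show ?thesis using \<open>p < 4\<close> \<open>g < 4\<close> by (auto simp: less_Suc_eq numeral_eq_Suc)
qed

text \<open>Here \<open>e\<^sub>r \<mapsto> d r\<close> commutes with all right multiplications; on the generators it is
  then a scalar modulo the span of \<open>e\<^sub>4, ..., e\<^sub>7\<close>.\<close>

lemma kcentroid_coords:
  fixes d :: "nat \<Rightarrow> vec"
  assumes H: "\<And>p q. p < 8 \<Longrightarrow> q < 8 \<Longrightarrow>
      (\<Sum>r<8. scl (kbracket (basis_vec p) (basis_vec q) r) (d r)) = kbracket (d p) (basis_vec q)"
    and "p < 4" "g < 4"
  shows "d p g = (if p = g then d 0 0 else 0)"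
proof -
  have E: "(\<Sum>r<8. kbracket (basis_vec p) (basis_vec q) r * d r s) =
      kbracket (d p) (basis_vec q) s" if "p < 8" "q < 8" for p q s
    using fun_cong[OF H[OF that], of s] by (simp add: sum_vec_apply)
  have "d 0 1 = 0 \<and> d 0 2 = 0 \<and> d 0 3 = 0 \<and>
      d 1 0 = 0 \<and> d 1 1 = d 0 0 \<and> d 1 2 = 0 \<and> d 1 3 = 0 \<and>
      d 2 0 = 0 \<and> d 2 1 = 0 \<and> d 2 2 = d 0 0 \<and> d 2 3 = 0 \<and>
      d 3 0 = 0 \<and> d 3 1 = 0 \<and> d 3 2 = 0 \<and> d 3 3 = d 0 0"
    using E[of 0 5 6] E[of 0 0 5] E[of 0 5 7] E[of 1 4 7] E[of 0 4 7] E[of 1 5 6]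
      E[of 5 1 6] E[of 5 3 7] E[of 1 4 6] E[of 1 1 5] E[of 2 2 5] E[of 2 4 6] E[of 2 5 6]
      E[of 2 5 7] E[of 3 4 7] E[of 3 3 5] E[of 3 4 6] E[of 3 5 7]
    by (simp add: sum_lessThan_8 kbracket_def wedge_def basis_vec_def)
  then show ?thesis using \<open>p < 4\<close> \<open>g < 4\<close> by (auto simp: less_Suc_eq numeral_eq_Suc)
qed

lemma block_linear_hbracket_same_block:
  assumes T: "linear_on (hspace N) T" and i: "i < N" and a: "a < 8" and b: "b < 8"
  shows "block i (T (hbracket N (basis_vec (8 * i + a)) (basis_vec (8 * i + b)))) =
    (\<Sum>r<8. scl (kbracket (basis_vec a) (basis_vec b) r) (block i (T (basis_vec (8 * i + r)))))"
proof -
  have "T (hbracket N (basis_vec (8 * i + a)) (basis_vec (8 * i + b))) =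
      (\<Sum>r<8. T (scl (kbracket (basis_vec a) (basis_vec b) r) (basis_vec (8 * i + r))))"
    unfolding hbracket_same_block[OF i a b] using i
    by (intro linear_on_sum[OF hspace_subspace T])
      (auto intro: V.subspace_scale[OF hspace_subspace] basis_vec_block_in_hspace)
  also have "\<dots> = (\<Sum>r<8. scl (kbracket (basis_vec a) (basis_vec b) r) (T (basis_vec (8 * i + r))))"
    using i by (intro sum.cong refl linear_on_scl[OF T] basis_vec_block_in_hspace) auto
  finally show ?thesis by (simp add: block_sum block_scl)
qed

lemma coords_of_central_commutators:
  assumes "\<And>q. q < 8 \<Longrightarrow> F q \<in> center (hspace N) (hbracket N)"
    and "\<And>q. q < 8 \<Longrightarrow> block j (F q) = kbracket u (basis_vec q)"
    and "j < N" "g < 4"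
  shows "u g = 0"
  using center_hspace_block[OF assms(1) assms(3)] assms(2,4)
  by (intro kbracket_centralizer_coords) auto

section \<open>Characteristic nilpotency\<close>

lemma derivation_block_generators:
  assumes D: "D \<in> derivations (hspace N) (hbracket N)" and i: "i < N" and "p < 4" "g < 4"
  shows "D (basis_vec (8 * i + p)) (8 * i + g) = 0"
proof -
  define d where "d r = block i (D (basis_vec (8 * i + r)))" for r
  have "(\<Sum>r<8. scl (kbracket (basis_vec a) (basis_vec b) r) (d r)) =
      kbracket (d a) (basis_vec b) + kbracket (basis_vec a) (d b)" if "a < 8" "b < 8" for a b
    using block_linear_hbracket_same_block[OF derivation_linear_on[OF D] i that]
      derivation_leibniz[OF D basis_vec_block_in_hspace[OF i that(1)]
        basis_vec_block_in_hspace[OF i that(2)]]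
      i that by (simp add: d_def block_add block_hbracket block_basis_vec_same)
  then have "d p g = 0" using kderivation_coords \<open>p < 4\<close> \<open>g < 4\<close> by blast
  then show ?thesis using \<open>g < 4\<close> by (simp add: d_def block_def)
qed

lemma derivation_other_blocks:
  assumes D: "D \<in> derivations (hspace N) (hbracket N)"
    and i: "i < N" and j: "j < N" and "i \<noteq> j" and p: "p < 8" and "g < 4"
  shows "D (basis_vec (8 * i + p)) (8 * j + g) = 0"
proof -
  have "block j (D (basis_vec (8 * i + p))) g = 0"
  proof (rule coords_of_central_commutators[OF _ _ j \<open>g < 4\<close>])
    fix q :: nat assume q: "q < 8"
    note ei = basis_vec_block_in_hspace[OF i p] and ej = basis_vec_block_in_hspace[OF j q]
    show "D (hbracket N (basis_vec (8 * i + p)) (basis_vec (8 * j + q)))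
        \<in> center (hspace N) (hbracket N)"
      using derivation_center[OF lie_algebra_hspace D] hbracket_other_blocks_center assms q by blast
    show "block j (D (hbracket N (basis_vec (8 * i + p)) (basis_vec (8 * j + q)))) =
        kbracket (block j (D (basis_vec (8 * i + p)))) (basis_vec q)"
      using derivation_leibniz[OF D ei ej] assms q
      by (simp add: block_add block_hbracket block_basis_vec_same block_basis_vec_other)
  qed
  then show ?thesis using \<open>g < 4\<close> by (simp add: block_def)
qed

lemma derivation_generator_hfilt:
  assumes D: "D \<in> derivations (hspace N) (hbracket N)" and i: "i < N" and p: "p < 4"
  shows "D (basis_vec (8 * i + p)) \<in> hfilt N 2"
proof -
  have "D (basis_vec (8 * i + p)) x = 0" if "hweight N x < 2" for x
  proof -
    define j g where "j = x div 8" and "g = x mod 8"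
    have "x = 8 * j + g" "j < N" "g < 4"
      using hweight_lt_2[OF that] by (simp_all add: j_def g_def)
    then show ?thesis
      using derivation_block_generators[OF D i p] derivation_other_blocks[OF D i _ _ _ \<open>g < 4\<close>] p
      by (cases "j = i") auto
  qed
  then show ?thesis
    using derivation_closed[OF D basis_vec_block_in_hspace[OF i]] p by (simp add: hfilt_def)
qed

lemma derivation_basis_vec_hfilt:
  assumes D: "D \<in> derivations (hspace N) (hbracket N)" and x: "x \<in> hindex N"
  shows "D (basis_vec x) \<in> hfilt N (hweight N x + 1)"
  using x
proof (induction "hweight N x" arbitrary: x rule: less_induct)
  case less
  show ?case
  proof (cases "hweight N x < 2")
    case True
    then have "x = 8 * (x div 8) + x mod 8" "x div 8 < N" "x mod 8 < 4" "hweight N x = 1"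
      using hweight_lt_2[OF True] hweight_ge_1[of N x] by simp_all
    then show ?thesis using derivation_generator_hfilt[OF D] by (metis one_add_one)
  next
    case False
    then obtain y z where yz: "y \<in> hindex N" "z \<in> hindex N"
      "hweight N y + hweight N z = hweight N x"
      "basis_vec x = hbracket N (basis_vec y) (basis_vec z)"
      using basis_vec_eq_hbracket[OF less.prems] by (metis not_le)
    have lt: "hweight N y < hweight N x" "hweight N z < hweight N x"
      using yz(3) hweight_ge_1[of N y] hweight_ge_1[of N z] by linarith+
    have "hbracket N (D (basis_vec y)) (basis_vec z) \<in> hfilt N (hweight N y + 1 + hweight N z)"
      using less.hyps[OF lt(1) yz(1)] basis_vec_in_hfilt[OF yz(2)] by (rule hbracket_hfilt)
    moreover have
      "hbracket N (basis_vec y) (D (basis_vec z)) \<in> hfilt N (hweight N y + (hweight N z + 1))"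
      using basis_vec_in_hfilt[OF yz(1)] less.hyps[OF lt(2) yz(2)] by (rule hbracket_hfilt)
    ultimately show ?thesis
      using yz derivation_leibniz[OF D basis_vec_in_hspace[OF yz(1)] basis_vec_in_hspace[OF yz(2)]]
      by (simp add: ac_simps V.subspace_add[OF hfilt_subspace])
  qed
qed

lemma derivation_hfilt:
  assumes D: "D \<in> derivations (hspace N) (hbracket N)" and v: "v \<in> hfilt N r"
  shows "D v \<in> hfilt N (r + 1)"
proof (rule linear_on_span_into[OF hspace_subspace derivation_linear_on[OF D] hfilt_subspace])
  show "v \<in> vspan (basis_vec ` {x \<in> hindex N. r \<le> hweight N x})"
    using v hfilt_eq_span by blast
  show "basis_vec ` {x \<in> hindex N. r \<le> hweight N x} \<subseteq> hspace N"
    using basis_vec_in_hspace by blast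
  fix b assume "b \<in> basis_vec ` {x \<in> hindex N. r \<le> hweight N x}"
  then obtain x where x: "x \<in> hindex N" "r \<le> hweight N x" "b = basis_vec x" by blast
  then show "D b \<in> hfilt N (r + 1)"
    using derivation_basis_vec_hfilt[OF D x(1)] hfilt_antimono[of "r + 1" "hweight N x + 1" N]
    by auto
qed

lemma char_seq_subset_hfilt: "char_seq (hspace N) (hbracket N) r \<subseteq> hfilt N (Suc r)"
proof (induction r)
  case 0
  then show ?case using hfilt_1 by simp
next
  case (Suc r)
  show ?case
  proof
    fix v assume "v \<in> char_seq (hspace N) (hbracket N) (Suc r)"
    then obtain D y where "v = D y" "D \<in> derivations (hspace N) (hbracket N)"
      "y \<in> char_seq (hspace N) (hbracket N) r" by auto
    then show "v \<in> hfilt N (Suc (Suc r))" using derivation_hfilt[of D N y "Suc r"] Suc by auto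
  qed
qed

lemma char_nilpotent_hspace: "char_nilpotent (hspace N) (hbracket N)"
proof -
  have "char_seq (hspace N) (hbracket N) 3 = {0}"
    using char_seq_subset_hfilt[of N 3] hfilt_4[of N] zero_in_char_seq[OF lie_algebra_hspace[of N]]
    by auto
  then show ?thesis
    unfolding char_nilpotent_def using nilpotent_hspace by (intro conjI exI[of _ 3]) auto
qed

section \<open>Nonsplitness\<close>

context
  fixes N I J
  assumes dec: "ideal_decomposition (hspace N) (hbracket N) I J"
begin

private lemmas proj_linear = linear_on_ideal_proj[OF lie_algebra_hspace dec]
private lemmas proj_bracket_left = ideal_proj_bracket_left[OF lie_algebra_hspace dec]

lemma ideal_proj_block_generators:
  assumes i: "i < N" and "p < 4" "g < 4"
  shows "ideal_proj I J (basis_vec (8 * i + p)) (8 * i + g) =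
    (if p = g then ideal_proj I J (basis_vec (8 * i)) (8 * i) else 0)"
proof -
  define d where "d r = block i (ideal_proj I J (basis_vec (8 * i + r)))" for r
  have "(\<Sum>r<8. scl (kbracket (basis_vec a) (basis_vec b) r) (d r)) = kbracket (d a) (basis_vec b)"
    if "a < 8" "b < 8" for a b
    using block_linear_hbracket_same_block[OF proj_linear i that]
      proj_bracket_left[OF basis_vec_block_in_hspace[OF i that(1)]
        basis_vec_block_in_hspace[OF i that(2)]]
      i that by (simp add: d_def block_hbracket block_basis_vec_same)
  then have "d p g = (if p = g then d 0 0 else 0)" using kcentroid_coords \<open>p < 4\<close> \<open>g < 4\<close> by blast
  then show ?thesis using \<open>g < 4\<close> by (simp add: d_def block_def)
qed

lemma ideal_proj_other_blocks:
  assumes i: "i < N" and j: "j < N" and "i \<noteq> j" and p: "p < 8" and "g < 4"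
  shows "ideal_proj I J (basis_vec (8 * i + p)) (8 * j + g) = 0"
proof -
  have "block j (ideal_proj I J (basis_vec (8 * i + p))) g = 0"
  proof (rule coords_of_central_commutators[OF _ _ j \<open>g < 4\<close>])
    fix q :: nat assume q: "q < 8"
    note ei = basis_vec_block_in_hspace[OF i p] and ej = basis_vec_block_in_hspace[OF j q]
    show "ideal_proj I J (hbracket N (basis_vec (8 * i + p)) (basis_vec (8 * j + q)))
        \<in> center (hspace N) (hbracket N)"
      using ideal_proj_center[OF lie_algebra_hspace dec] hbracket_other_blocks_center assms q
      by blast
    show "block j (ideal_proj I J (hbracket N (basis_vec (8 * i + p)) (basis_vec (8 * j + q)))) =
        kbracket (block j (ideal_proj I J (basis_vec (8 * i + p)))) (basis_vec q)"
      using proj_bracket_left[OF ei ej] assms q by (simp add: block_hbracket block_basis_vec_same)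
  qed
  then show ?thesis using \<open>g < 4\<close> by (simp add: block_def)
qed

lemma ideal_proj_block_scalar:
  assumes "i < N"
  shows "ideal_proj I J (basis_vec (8 * i)) (8 * i) = ideal_proj I J (basis_vec 0) 0"
proof (cases "i = 0")
  \<comment> \<open>compare the \<open>a\<^sub>0\<^sub>i\<close>-coordinates of \<open>[\<pi> e\<^sub>0, e\<^sub>8\<^sub>i] = \<pi> [e\<^sub>0, e\<^sub>8\<^sub>i] = [e\<^sub>0, \<pi> e\<^sub>8\<^sub>i]\<close>\<close>
  case False
  have e: "basis_vec 0 \<in> hspace N" "basis_vec (8 * i) \<in> hspace N"
    using basis_vec_block_in_hspace[of 0 N 0] basis_vec_block_in_hspace[of i N 0] assms by simp_all
  have "hbracket N (ideal_proj I J (basis_vec 0)) (basis_vec (8 * i)) =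
      hbracket N (basis_vec 0) (ideal_proj I J (basis_vec (8 * i)))"
    using proj_bracket_left[OF e] ideal_proj_bracket_right[OF lie_algebra_hspace dec e] by simp
  from fun_cong[OF this, of "cross_index N 0 i"] show ?thesis
    using False assms by (simp add: hbracket_cross_index wedge_def basis_vec_def)
qed simp

lemma ideal_proj_scalar_mod_hfilt:
  assumes v: "v \<in> hspace N"
  shows "ideal_proj I J v - scl (ideal_proj I J (basis_vec 0) 0) v \<in> hfilt N 2"
proof -
  define c where "c = ideal_proj I J (basis_vec 0) 0"
  have lin: "linear_on (hspace N) (\<lambda>v. ideal_proj I J v - scl c v)"
    using linear_on_add[OF proj_linear] linear_on_scl[OF proj_linear]
    by (auto simp: linear_on_def fun_eq_iff algebra_simps)
  have basis: "ideal_proj I J (basis_vec x) - scl c (basis_vec x) \<in> hfilt N 2"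
    if x: "x \<in> hindex N" for x
  proof (cases "2 \<le> hweight N x")
    case True
    then obtain y z where yz: "y \<in> hindex N" "z \<in> hindex N"
      "basis_vec x = hbracket N (basis_vec y) (basis_vec z)"
      using basis_vec_eq_hbracket[OF x] by metis
    have "hbracket N (ideal_proj I J (basis_vec y)) (basis_vec z) \<in> hfilt N (1 + 1)"
      using ideal_proj_closed[OF lie_algebra_hspace dec basis_vec_in_hspace[OF yz(1)]]
        basis_vec_in_hspace[OF yz(2)] hfilt_1 by (intro hbracket_hfilt) auto
    then have "ideal_proj I J (basis_vec x) \<in> hfilt N 2"
      using yz proj_bracket_left[OF basis_vec_in_hspace basis_vec_in_hspace]
      by (simp add: numeral_2_eq_2)
    moreover have "scl c (basis_vec x) \<in> hfilt N 2"
      using basis_vec_in_hfilt[OF x] hfilt_antimono[OF True]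
      by (blast intro: V.subspace_scale[OF hfilt_subspace])
    ultimately show ?thesis by (simp add: V.subspace_diff[OF hfilt_subspace])
  next
    case False
    define i p where "i = x div 8" and "p = x mod 8"
    have x_eq: "x = 8 * i + p" and i: "i < N" and p: "p < 4"
      using hweight_lt_2[of N x] False by (simp_all add: i_def p_def)
    have "(ideal_proj I J (basis_vec x) - scl c (basis_vec x)) y = 0" if "hweight N y < 2" for y
    proof -
      define j g where "j = y div 8" and "g = y mod 8"
      have y_eq: "y = 8 * j + g" and j: "j < N" and g: "g < 4"
        using hweight_lt_2[OF that] by (simp_all add: j_def g_def)
      show ?thesis
      proof (cases "j = i")
        case True
        then show ?thesis using ideal_proj_block_generators[OF i p g] ideal_proj_block_scalar[OF i]
          x_eq y_eq by (simp add: c_def basis_vec_def)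
      next
        case False
        then have "y \<noteq> x" using x_eq y_eq p g by presburger
        then show ?thesis using ideal_proj_other_blocks[OF i j _ _ g, of p] False p x_eq y_eq
          by (simp add: basis_vec_def)
      qed
    qed
    moreover have "ideal_proj I J (basis_vec x) - scl c (basis_vec x) \<in> hspace N"
      using ideal_proj_closed[OF lie_algebra_hspace dec] basis_vec_in_hspace[OF x] hspace_subspace
      by (blast intro: V.subspace_diff V.subspace_scale)
    ultimately show ?thesis by (simp add: hfilt_def)
  qed
  have "ideal_proj I J v - scl c v \<in> hfilt N 2"
  proof (rule linear_on_span_into[OF hspace_subspace lin hfilt_subspace])
    show "basis_vec ` hindex N \<subseteq> hspace N" using basis_vec_in_hspace by blast
    show "v \<in> vspan (basis_vec ` hindex N)" using v span_basis_vec_hindex by blast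
  qed (use basis in blast)
  then show ?thesis by (simp add: c_def)
qed

end

lemma ideal_summand_in_hfilt_trivial:
  assumes dec: "ideal_decomposition (hspace N) (hbracket N) K K'" and K2: "K \<subseteq> hfilt N 2"
  shows "K = {0}"
proof -
  note proj_linear = linear_on_ideal_proj[OF lie_algebra_hspace dec]
  have "K \<subseteq> hfilt N (r + 2)" for r
  proof (induction r)
    case 0
    then show ?case using K2 by (simp add: numeral_2_eq_2)
  next
    case (Suc r)
    have gen: "ideal_proj K K' (basis_vec x) \<in> hfilt N (Suc r + 2)"
      if x: "x \<in> hindex N" "2 \<le> hweight N x" for x
    proof -
      obtain y z where yz: "y \<in> hindex N" "z \<in> hindex N"
        "basis_vec x = hbracket N (basis_vec y) (basis_vec z)"
        using basis_vec_eq_hbracket[OF x] by metis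
      note ey = basis_vec_in_hspace[OF yz(1)] and ez = basis_vec_in_hspace[OF yz(2)]
      have "ideal_proj K K' (basis_vec y) \<in> hfilt N (r + 2)"
        "ideal_proj K K' (basis_vec z) \<in> hfilt N (r + 2)"
        using ideal_proj_mem(1)[OF lie_algebra_hspace dec] ey ez Suc.IH by blast+
      then have "hbracket N (ideal_proj K K' (basis_vec y)) (ideal_proj K K' (basis_vec z))
          \<in> hfilt N ((r + 2) + (r + 2))" by (rule hbracket_hfilt)
      then show ?thesis
        using yz(3) ideal_proj_bracket[OF lie_algebra_hspace dec ey ez]
          hfilt_antimono[of "Suc r + 2" "(r + 2) + (r + 2)" N] by auto
    qed
    show ?case
    proof
      fix v assume v: "v \<in> K"
      have "ideal_proj K K' v \<in> hfilt N (Suc r + 2)"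
      proof (rule linear_on_span_into[OF hspace_subspace proj_linear hfilt_subspace])
        show "basis_vec ` {x \<in> hindex N. 2 \<le> hweight N x} \<subseteq> hspace N"
          using basis_vec_in_hspace by blast
        show "v \<in> vspan (basis_vec ` {x \<in> hindex N. 2 \<le> hweight N x})"
          using K2 v hfilt_eq_span by blast
      qed (use gen in blast)
      then show "v \<in> hfilt N (Suc r + 2)"
        using ideal_proj_eq_self[OF lie_algebra_hspace dec v] by simp
    qed
  qed
  from this[of 2] have "K \<subseteq> {0}" using hfilt_4[of N] by simp
  moreover have "0 \<in> K" using ideal_decompositionD(2)[OF dec] V.subspace_0 by blast
  ultimately show ?thesis by blast
qed

lemma ideal_summand_in_hfilt:
  assumes dec: "ideal_decomposition (hspace N) (hbracket N) I J"
  shows "I \<subseteq> hfilt N 2 \<or> J \<subseteq> hfilt N 2"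
proof -
  define c where "c = ideal_proj I J (basis_vec 0) 0"
  have mod2: "ideal_proj I J v - scl c v \<in> hfilt N 2" if "v \<in> hspace N" for v
    using ideal_proj_scalar_mod_hfilt[OF dec that] by (simp add: c_def)
  note hspace = ideal_decompositionD(3)[OF dec]
    ideal_decompositionD(3)[OF ideal_decomposition_sym[OF dec]]
  show ?thesis
  proof (cases "c = 1")
    case True
    have "v \<in> hfilt N 2" if v: "v \<in> J" for v
    proof -
      have "- v \<in> hfilt N 2"
        using mod2[of v] v hspace ideal_proj_eq_zero[OF lie_algebra_hspace dec v] True by auto
      then show ?thesis using V.subspace_neg[OF hfilt_subspace] by fastforce
    qed
    then show ?thesis by blast
  next
    case False
    have "v \<in> hfilt N 2" if v: "v \<in> I" for v
    proof -
      have "scl (1 - c) v \<in> hfilt N 2"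
        using mod2[of v] v hspace ideal_proj_eq_self[OF lie_algebra_hspace dec v]
        by (auto simp: fun_eq_iff algebra_simps)
      then have "scl (1 / (1 - c)) (scl (1 - c) v) \<in> hfilt N 2"
        by (rule V.subspace_scale[OF hfilt_subspace])
      then show ?thesis using False by simp
    qed
    then show ?thesis by blast
  qed
qed

lemma nonsplit_hspace: "nonsplit (hspace N) (hbracket N)"
  unfolding nonsplit_iff
proof clarify
  fix I J
  assume dec: "ideal_decomposition (hspace N) (hbracket N) I J" and "I \<noteq> {0}" "J \<noteq> {0}"
  then show False
    using ideal_summand_in_hfilt[OF dec] ideal_summand_in_hfilt_trivial[OF dec]
      ideal_summand_in_hfilt_trivial[OF ideal_decomposition_sym[OF dec]] by blast
qed

section \<open>Dimensions\<close>

definition cross_indices :: "nat \<Rightarrow> nat set" where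
  "cross_indices N = {cross_index N i j | i j. i < j \<and> j < N}"

lemma hindex_eq: "hindex N = {..<8 * N} \<union> cross_indices N"
  by (auto simp: hindex_def cross_indices_def)

lemma finite_cross_indices: "finite (cross_indices N)"
  using finite_hindex[of N] by (rule finite_subset[rotated]) (auto simp: hindex_eq)

lemma card_cross_indices_le_dim_center:
  "card (cross_indices N) \<le> vdim (center (hspace N) (hbracket N))"
proof -
  let ?Z = "center (hspace N) (hbracket N)"
  have B: "basis_vec ` cross_indices N \<subseteq> ?Z"
    by (auto simp: cross_indices_def block_basis_vec_cross basis_vec_in_hspace cross_index_in_hindex
        intro!: in_center_hspace_if_blocks_zero)
  obtain C where C: "C \<subseteq> ?Z" "V.independent C" "?Z \<subseteq> vspan C" "card C = vdim ?Z"
    using V.basis_exists by blast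
  have "C \<subseteq> vspan (basis_vec ` hindex N)"
    using C(1) span_basis_vec_hindex[of N] by (auto simp: center_def)
  then have "finite C"
    using V.independent_span_bound[of "basis_vec ` hindex N" C] C(2) finite_hindex by auto
  moreover have "basis_vec ` cross_indices N \<subseteq> vspan C" using B C(3) by blast
  ultimately have "card (basis_vec ` cross_indices N) \<le> card C"
    using V.independent_span_bound independent_basis_vec[OF finite_cross_indices] by blast
  then show ?thesis
    using C(4) card_image[OF inj_on_subset[OF inj_basis_vec]] by simp
qed

lemma dim_derived_le: "vdim (derived (hspace N) (hbracket N)) \<le> 8 * N + card (cross_indices N)"
proof -
  have "derived (hspace N) (hbracket N) \<subseteq> vspan (basis_vec ` hindex N)"
    unfolding derived_def span_basis_vec_hindex
    by (rule V.span_minimal) (auto simp: hbracket_in_hspace hspace_subspace)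
  then have "vdim (derived (hspace N) (hbracket N)) \<le> card (basis_vec ` hindex N)"
    by (rule V.dim_le_card) (simp add: finite_hindex)
  also have "\<dots> \<le> card (hindex N)" by (rule card_image_le[OF finite_hindex])
  also have "\<dots> \<le> card {..<8 * N} + card (cross_indices N)" unfolding hindex_eq by (rule card_Un_le)
  finally show ?thesis by simp
qed

lemma card_cross_indices_ge: "K * K \<le> card (cross_indices (2 * K))"
proof -
  let ?f = "\<lambda>(i, j). cross_index (2 * K) i j"
  have "?f ` ({..<K} \<times> {K..<2 * K}) \<subseteq> cross_indices (2 * K)"
    by (force simp: cross_indices_def)
  moreover have "inj_on ?f ({..<K} \<times> {K..<2 * K})"
    by (rule inj_onI) (auto simp: cross_index_inj)
  then have "card (?f ` ({..<K} \<times> {K..<2 * K})) = K * K"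
    by (simp add: card_image card_cartesian_product)
  ultimately show ?thesis using card_mono[OF finite_cross_indices] by metis
qed

theorem mainTheorem3:
  fixes \<epsilon> :: real
  assumes "\<epsilon> > 0"
  shows "\<exists>L br. lie_algebra L br \<and> nonsplit L br \<and> char_nilpotent L br \<and>
           vdim (center L br) > 0 \<and>
           (real (vdim (derived L br)) - real (vdim (center L br))) / real (vdim (center L br)) < \<epsilon>"
proof -
  obtain K :: nat where K: "16 / \<epsilon> < real K" using reals_Archimedean2 by blast
  then have K0: "0 < real K" using assms by (smt (verit) divide_pos_pos)
  define N where "N = 2 * K"
  define dZ dD where "dZ = real (vdim (center (hspace N) (hbracket N)))"
    and "dD = real (vdim (derived (hspace N) (hbracket N)))"
  have Z: "real K * real K \<le> dZ"
    using card_cross_indices_ge[of K] card_cross_indices_le_dim_center[of N]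
    unfolding dZ_def N_def by (metis of_nat_le_iff of_nat_mult order_trans)
  have D: "dD - dZ \<le> 16 * real K"
    using dim_derived_le[of N] card_cross_indices_le_dim_center[of N]
    unfolding dD_def dZ_def N_def by linarith
  have Z0: "0 < dZ" using Z K0 by (smt (verit) mult_pos_pos)
  have "(dD - dZ) / dZ \<le> 16 * real K / (real K * real K)"
    using D Z K0 by (intro frac_le) auto
  also have "\<dots> = 16 / real K" using K0 by simp
  also have "\<dots> < \<epsilon>" using K K0 assms by (simp add: field_simps)
  finally show ?thesis
    using lie_algebra_hspace nonsplit_hspace char_nilpotent_hspace Z0
    unfolding dZ_def dD_def by (intro exI[of _ "hspace N"] exI[of _ "hbracket N"]) auto
qed

end
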